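(* Let $S$ be a Stone space with $|S|\ge 3$ and $I$ a set of isolated points of $S$. Then $Q_6(I,S)=(S\cup\zeta(S);\tau,\le,\zeta)$ is a $pm$-space of height $1$.
   Context: A $pm$-space is $(P;\tau,\le,\zeta)$ where $(P;\tau,\le)$ is a Priestley space (compact, and whenever $y\not\le x$ there is a clopen decreasing set containing $x$ but not $y$), $[X)$ is clopen for every clopen decreasing $X\subseteq P$, and $\zeta$ is a continuous order-reversing involution. $Q_6(I,S)$ is $S\cup\zeta(S)$ where $\zeta(S)$ is a disjoint homeomorphic copy of $S$, $\tau$ is the disjoint union topology, $\zeta$ interchanges each $s\in S$ with its copy $\zeta(s)$, and $\le$ is the partial order whose only strict comparabilities are: for $x,y\in S$, $x<\zeta(y)$ iff ($x\ne y$ or $x\notin I$). *)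

theory Defs
  imports "HOL-Analysis.Analysis"
begin

definition stone_space :: "'a topology \<Rightarrow> bool" where
  "stone_space X \<longleftrightarrow> compact_space X \<and> Hausdorff_space X \<and>
     (\<forall>x\<in>topspace X. connected_component_of_set X x = {x})"

definition partial_order_on_set :: "'a set \<Rightarrow> ('a \<Rightarrow> 'a \<Rightarrow> bool) \<Rightarrow> bool" where
  "partial_order_on_set P le \<longleftrightarrow>
     (\<forall>x\<in>P. le x x) \<and>
     (\<forall>x\<in>P. \<forall>y\<in>P. le x y \<and> le y x \<longrightarrow> x = y) \<and>
     (\<forall>x\<in>P. \<forall>y\<in>P. \<forall>z\<in>P. le x y \<and> le y z \<longrightarrow> le x z)"

definition decreasing_set :: "'a set \<Rightarrow> ('a \<Rightarrow> 'a \<Rightarrow> bool) \<Rightarrow> 'a set \<Rightarrow> bool" where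
  "decreasing_set P le U \<longleftrightarrow> U \<subseteq> P \<and> (\<forall>a\<in>U. \<forall>b\<in>P. le b a \<longrightarrow> b \<in> U)"

definition up_closure :: "'a set \<Rightarrow> ('a \<Rightarrow> 'a \<Rightarrow> bool) \<Rightarrow> 'a set \<Rightarrow> 'a set" where
  "up_closure P le X = {y\<in>P. \<exists>x\<in>X. le x y}"

definition priestley_space :: "'a topology \<Rightarrow> ('a \<Rightarrow> 'a \<Rightarrow> bool) \<Rightarrow> bool" where
  "priestley_space T le \<longleftrightarrow>
     compact_space T \<and> partial_order_on_set (topspace T) le \<and>
     (\<forall>x\<in>topspace T. \<forall>y\<in>topspace T. \<not> le y x \<longrightarrow>
        (\<exists>U. openin T U \<and> closedin T U \<and> decreasing_set (topspace T) le U \<and> x \<in> U \<and> y \<notin> U))"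

definition pm_space :: "'a topology \<Rightarrow> ('a \<Rightarrow> 'a \<Rightarrow> bool) \<Rightarrow> ('a \<Rightarrow> 'a) \<Rightarrow> bool" where
  "pm_space T le \<zeta> \<longleftrightarrow>
     priestley_space T le \<and>
     (\<forall>X. openin T X \<and> closedin T X \<and> decreasing_set (topspace T) le X \<longrightarrow>
          openin T (up_closure (topspace T) le X) \<and> closedin T (up_closure (topspace T) le X)) \<and>
     continuous_map T T \<zeta> \<and>
     (\<forall>x\<in>topspace T. \<forall>y\<in>topspace T. le x y \<longrightarrow> le (\<zeta> y) (\<zeta> x)) \<and>
     (\<forall>x\<in>topspace T. \<zeta> (\<zeta> x) = x)"

definition chain_in :: "'a set \<Rightarrow> ('a \<Rightarrow> 'a \<Rightarrow> bool) \<Rightarrow> 'a set \<Rightarrow> bool" where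
  "chain_in P le C \<longleftrightarrow> C \<subseteq> P \<and> (\<forall>a\<in>C. \<forall>b\<in>C. le a b \<or> le b a)"

definition has_height :: "'a set \<Rightarrow> ('a \<Rightarrow> 'a \<Rightarrow> bool) \<Rightarrow> nat \<Rightarrow> bool" where
  "has_height P le n \<longleftrightarrow>
     (\<exists>C. finite C \<and> chain_in P le C \<and> card C = n + 1) \<and>
     (\<forall>C. finite C \<and> chain_in P le C \<longrightarrow> card C \<le> n + 1)"

text \<open>The space Q_6(I,S): carrier bool \<times> 'a, (False,s) is s and (True,s) is its copy \<zeta>(s).\<close>
definition Q6_top :: "'a topology \<Rightarrow> (bool \<times> 'a) topology" where
  "Q6_top S = sum_topology (\<lambda>_. S) UNIV"

definition Q6_le :: "'a set \<Rightarrow> bool \<times> 'a \<Rightarrow> bool \<times> 'a \<Rightarrow> bool" where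
  "Q6_le I p q \<longleftrightarrow> p = q \<or>
     (fst p = False \<and> fst q = True \<and> (snd p \<noteq> snd q \<or> snd p \<notin> I))"

definition Q6_zeta :: "bool \<times> 'a \<Rightarrow> bool \<times> 'a" where
  "Q6_zeta p = (\<not> fst p, snd p)"

end

theory Submission
  imports Defs
begin

text \<open>
  The clopen subsets of the disjoint sum are the sets \<open>F \<times> {False} \<union> G \<times> {True}\<close> with \<open>F, G\<close>
  clopen in \<open>S\<close>, and the only strict comparabilities go from the bottom copy to the top one,
  so chains have at most two elements. A clopen down-set separating two points is built from a
  clopen set of \<open>S\<close> separating their underlying points; the incomparable pair \<open>x, \<zeta>(x)\<close> with
  \<open>x \<in> I\<close> is separated by the isolated point \<open>{x}\<close>. The up-set of a clopen set adds to its top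
  part the points lying above its bottom part \<open>F\<close>: these form all of \<open>S\<close>, unless \<open>F\<close> is empty or
  a single isolated point \<open>a\<close>, in which case they form \<open>S - {a}\<close>, again clopen.
\<close>

lemma compact_space_sum_topology:
  assumes "finite I" "\<And>i. i \<in> I \<Longrightarrow> compact_space (X i)"
  shows "compact_space (sum_topology X I)"
proof -
  have "topspace (sum_topology X I) = (\<Union>i\<in>I. (\<lambda>x. (i, x)) ` topspace (X i))"
    by auto
  moreover have "compactin (sum_topology X I) ((\<lambda>x. (i, x)) ` topspace (X i))" if "i \<in> I" for i
    using image_compactin assms(2)[OF that] continuous_map_component_injection[OF that]
    unfolding compact_space_def by blast
  ultimately show ?thesis
    unfolding compact_space_def using assms(1) by (auto intro!: compactin_Union)
qed

lemma stone_space_separate_points: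
  assumes "stone_space S" "s \<in> topspace S" "t \<in> topspace S" "s \<noteq> t"
  obtains V where "openin S V" "closedin S V" "s \<in> V" "t \<notin> V"
proof -
  have "quasi_component_of S s = connected_component_of S s"
    using assms(1) by (intro quasi_eq_connected_component_of) (simp add: stone_space_def)
  moreover have "connected_component_of_set S s = {s}"
    using assms(1,2) by (simp add: stone_space_def)
  ultimately have "\<not> quasi_component_of S s t"
    using assms(4) by auto
  then obtain T where T: "openin S T" "closedin S T" "s \<in> T \<longleftrightarrow> t \<notin> T"
    using assms(2,3) unfolding quasi_component_of_def by blast
  show thesis
  proof (cases "s \<in> T")
    case True
    then show thesis using T that by blast
  next
    case False
    then show thesis
      using T assms(2) that[of "topspace S - T"] by (auto simp: openin_diff closedin_diff)
  qed
qed

lemma stone_space_imp_t1_space: "stone_space S \<Longrightarrow> t1_space S"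
  by (simp add: stone_space_def Hausdorff_imp_t1_space)

lemma clopen_Q6_copies_above:
  assumes "t1_space S" "\<forall>x\<in>I. openin S {x}"
  shows "openin S {t \<in> topspace S. \<exists>s\<in>A. s \<noteq> t \<or> s \<notin> I} \<and>
         closedin S {t \<in> topspace S. \<exists>s\<in>A. s \<noteq> t \<or> s \<notin> I}"
proof (cases "{t \<in> topspace S. \<exists>s\<in>A. s \<noteq> t \<or> s \<notin> I} = topspace S")
  case False
  then obtain a where a: "a \<in> topspace S" "\<forall>s\<in>A. s = a \<and> s \<in> I"
    by blast
  then have "A \<subseteq> {a}"
    by blast
  then consider "A = {}" | "A = {a}"
    by (meson subset_singletonD)
  then show ?thesis
  proof cases
    case 2
    with a have "a \<in> I" by blast
    with 2 have "{t \<in> topspace S. \<exists>s\<in>A. s \<noteq> t \<or> s \<notin> I} = topspace S - {a}"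
      by auto
    then show ?thesis
      using assms a \<open>a \<in> I\<close> by (simp add: openin_diff closedin_diff t1_space_closedin_singleton)
  qed simp
qed simp

lemma topspace_Q6_top [simp]: "topspace (Q6_top S) = UNIV \<times> topspace S"
  by (simp add: Q6_top_def)

lemma clopen_Q6_top_Sigma:
  assumes "\<And>b. openin S (F b)" "\<And>b. closedin S (F b)"
  shows "openin (Q6_top S) (Sigma UNIV F)" "closedin (Q6_top S) (Sigma UNIV F)"
  using assms by (simp_all add: Q6_top_def openin_disjoint_union closedin_disjoint_union)

lemma continuous_map_Q6_zeta: "continuous_map (Q6_top S) (Q6_top S) Q6_zeta"
  unfolding continuous_map_def
proof (intro conjI allI impI)
  show "Q6_zeta \<in> topspace (Q6_top S) \<rightarrow> topspace (Q6_top S)"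
    by (auto simp: Q6_zeta_def)
next
  fix U assume "openin (Q6_top S) U"
  then obtain F where U: "U = Sigma UNIV F" and F: "\<And>b. openin S (F b)"
    by (auto simp: Q6_top_def openin_sum_topology_alt)
  have "{p \<in> topspace (Q6_top S). Q6_zeta p \<in> U} = Sigma UNIV (\<lambda>b. F (\<not> b))"
    using F openin_subset by (fastforce simp: U Q6_zeta_def)
  then show "openin (Q6_top S) {p \<in> topspace (Q6_top S). Q6_zeta p \<in> U}"
    using F by (simp add: Q6_top_def openin_disjoint_union)
qed

lemma partial_order_on_set_Q6_le: "partial_order_on_set P (Q6_le I)"
  unfolding partial_order_on_set_def Q6_le_def by auto

lemma decreasing_set_Q6_Sigma:
  assumes "\<And>b. F b \<subseteq> T"
    and "\<And>u v. u \<in> F True \<Longrightarrow> v \<in> T \<Longrightarrow> v \<noteq> u \<or> v \<notin> I \<Longrightarrow> v \<in> F False"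
  shows "decreasing_set (UNIV \<times> T) (Q6_le I) (Sigma UNIV F)"
  unfolding decreasing_set_def
proof (intro conjI ballI impI)
  show "Sigma UNIV F \<subseteq> UNIV \<times> T" using assms(1) by auto
next
  fix p q assume "p \<in> Sigma UNIV F" "q \<in> UNIV \<times> T" "Q6_le I q p"
  then show "q \<in> Sigma UNIV F"
    using assms(2) by (cases p; cases q) (auto simp: Q6_le_def)
qed

lemma Q6_separating_down_set:
  assumes "\<And>b. openin S (F b)" "\<And>b. closedin S (F b)"
    and "\<And>u v. u \<in> F True \<Longrightarrow> v \<in> topspace S \<Longrightarrow> v \<noteq> u \<or> v \<notin> I \<Longrightarrow> v \<in> F False"
    and "x \<in> Sigma UNIV F" "y \<notin> Sigma UNIV F"
  shows "\<exists>U. openin (Q6_top S) U \<and> closedin (Q6_top S) U \<and>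
           decreasing_set (topspace (Q6_top S)) (Q6_le I) U \<and> x \<in> U \<and> y \<notin> U"
proof (intro exI conjI)
  show "decreasing_set (topspace (Q6_top S)) (Q6_le I) (Sigma UNIV F)"
    unfolding topspace_Q6_top using openin_subset[OF assms(1)] assms(3) by (rule decreasing_set_Q6_Sigma)
qed (use assms clopen_Q6_top_Sigma[OF assms(1,2)] in auto)

lemma priestley_space_Q6:
  assumes S: "stone_space S" and I: "\<forall>x\<in>I. openin S {x}"
  shows "priestley_space (Q6_top S) (Q6_le I)"
  unfolding priestley_space_def
proof (intro conjI ballI impI)
  show "compact_space (Q6_top S)"
    using S by (simp add: Q6_top_def stone_space_def compact_space_sum_topology)
  show "partial_order_on_set (topspace (Q6_top S)) (Q6_le I)"
    by (rule partial_order_on_set_Q6_le)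
next
  let ?T = "topspace S"
  have "t1_space S"
    using S by (rule stone_space_imp_t1_space)
  fix x y assume "x \<in> topspace (Q6_top S)" "y \<in> topspace (Q6_top S)" and yx: "\<not> Q6_le I y x"
  then obtain b s c t where x: "x = (b, s)" and y: "y = (c, t)" and st: "s \<in> ?T" "t \<in> ?T"
    by auto
  show "\<exists>U. openin (Q6_top S) U \<and> closedin (Q6_top S) U \<and>
          decreasing_set (topspace (Q6_top S)) (Q6_le I) U \<and> x \<in> U \<and> y \<notin> U"
  proof (cases "b = c")
    case True
    with yx have "s \<noteq> t" by (auto simp: x y Q6_le_def)
    then obtain V where V: "openin S V" "closedin S V" "s \<in> V" "t \<notin> V"
      using stone_space_separate_points[OF S st] by blast
    show ?thesis
    proof (cases b)
      case True
      show ?thesis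
        by (rule Q6_separating_down_set[where F = "\<lambda>b. if b then V else ?T"])
           (use V True \<open>b = c\<close> closedin_subset[OF V(2)] in \<open>auto simp: x y\<close>)
    next
      case False
      show ?thesis
        by (rule Q6_separating_down_set[where F = "\<lambda>b. if b then {} else V"])
           (use V False \<open>b = c\<close> in \<open>auto simp: x y\<close>)
    qed
  next
    case False
    show ?thesis
    proof (cases b)
      case True
      with yx False have "t = s" "s \<in> I" by (auto simp: x y Q6_le_def)
      moreover have "openin S {s}" "closedin S {s}"
        using I \<open>s \<in> I\<close> \<open>t1_space S\<close> st by (auto simp: t1_space_closedin_singleton)
      ultimately show ?thesis
        by (intro Q6_separating_down_set[where F = "\<lambda>b. if b then {s} else ?T - {s}"])
           (use True False in \<open>auto simp: x y openin_diff closedin_diff\<close>)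
    next
      case False
      show ?thesis
        by (rule Q6_separating_down_set[where F = "\<lambda>b. if b then {} else ?T"])
           (use False \<open>b \<noteq> c\<close> st in \<open>auto simp: x y\<close>)
    qed
  qed
qed

lemma up_closure_Q6_Sigma:
  assumes "\<And>b. F b \<subseteq> T"
  shows "up_closure (UNIV \<times> T) (Q6_le I) (Sigma UNIV F) =
    Sigma UNIV (\<lambda>b. if b then F True \<union> {t \<in> T. \<exists>s \<in> F False. s \<noteq> t \<or> s \<notin> I} else F False)"
  unfolding up_closure_def
proof (intro set_eqI iffI)
  fix p assume "p \<in> {q \<in> UNIV \<times> T. \<exists>p\<in>Sigma UNIV F. Q6_le I p q}"
  then obtain b t c s where "p = (b, t)" "t \<in> T" "s \<in> F c" "Q6_le I (c, s) (b, t)"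
    by auto
  then show "p \<in> Sigma UNIV (\<lambda>b. if b then F True \<union> {t \<in> T. \<exists>s \<in> F False. s \<noteq> t \<or> s \<notin> I} else F False)"
    by (cases b; cases c) (auto simp: Q6_le_def)
next
  fix p assume "p \<in> Sigma UNIV (\<lambda>b. if b then F True \<union> {t \<in> T. \<exists>s \<in> F False. s \<noteq> t \<or> s \<notin> I} else F False)"
  then obtain b t where p: "p = (b, t)"
    and t: "t \<in> (if b then F True \<union> {t \<in> T. \<exists>s \<in> F False. s \<noteq> t \<or> s \<notin> I} else F False)"
    by blast
  show "p \<in> {q \<in> UNIV \<times> T. \<exists>p\<in>Sigma UNIV F. Q6_le I p q}"
  proof (cases "t \<in> F b")
    case True
    with assms have "(b, t) \<in> Sigma UNIV F" "t \<in> T"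
      by auto
    then show ?thesis
      unfolding p Q6_le_def by blast
  next
    case False
    with t obtain s where "b" "t \<in> T" "s \<in> F False" "s \<noteq> t \<or> s \<notin> I"
      by (auto split: if_splits)
    then have "p = (True, t)" "Q6_le I (False, s) (True, t)"
      by (simp_all add: p Q6_le_def)
    with \<open>t \<in> T\<close> \<open>s \<in> F False\<close> show ?thesis
      by blast
  qed
qed

lemma clopen_up_closure_Q6:
  assumes "t1_space S" "\<forall>x\<in>I. openin S {x}"
    and "openin (Q6_top S) X" "closedin (Q6_top S) X"
  shows "openin (Q6_top S) (up_closure (topspace (Q6_top S)) (Q6_le I) X) \<and>
         closedin (Q6_top S) (up_closure (topspace (Q6_top S)) (Q6_le I) X)"
proof -
  obtain F where X: "X = Sigma UNIV F" and F: "\<And>b. openin S (F b)"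
    using assms(3) by (auto simp: Q6_top_def openin_sum_topology_alt)
  have "closedin S (F b)" for b
    using assms(4) by (simp add: X Q6_top_def closedin_disjoint_union)
  define G where "G = (\<lambda>b. if b then F True \<union> {t \<in> topspace S. \<exists>s\<in>F False. s \<noteq> t \<or> s \<notin> I}
                            else F False)"
  have "F b \<subseteq> topspace S" for b
    using F openin_subset by blast
  then have "up_closure (topspace (Q6_top S)) (Q6_le I) X = Sigma UNIV G"
    by (simp add: X G_def up_closure_Q6_Sigma)
  moreover have "openin S (G b)" "closedin S (G b)" for b
    using F \<open>\<And>b. closedin S (F b)\<close> clopen_Q6_copies_above[OF assms(1,2), of "F False"]
    by (auto simp: G_def)
  ultimately show ?thesis
    by (simp add: clopen_Q6_top_Sigma)
qed

lemma has_height_Q6: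
  assumes "a \<in> topspace S" "b \<in> topspace S" "a \<noteq> b"
  shows "has_height (topspace (Q6_top S)) (Q6_le I) 1"
  unfolding has_height_def
proof (intro conjI allI impI)
  show "\<exists>C. finite C \<and> chain_in (topspace (Q6_top S)) (Q6_le I) C \<and> card C = 1 + 1"
    using assms by (intro exI[of _ "{(False, a), (True, b)}"]) (auto simp: chain_in_def Q6_le_def)
next
  fix C :: "(bool \<times> 'a) set"
  assume C: "finite C \<and> chain_in (topspace (Q6_top S)) (Q6_le I) C"
  have level: "card (C \<inter> {p. fst p = v}) \<le> 1" for v
    using C by (auto simp: chain_in_def Q6_le_def card_le_Suc0_iff_eq)
  have "C = (C \<inter> {p. fst p = True}) \<union> (C \<inter> {p. fst p = False})"
    by auto
  then have "card C \<le> card (C \<inter> {p. fst p = True}) + card (C \<inter> {p. fst p = False})"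
    by (metis card_Un_le)
  then show "card C \<le> 1 + 1"
    using level[of True] level[of False] by linarith
qed

theorem theorem4p7:
  fixes S :: "'a topology" and I :: "'a set"
  assumes "stone_space S"
    and "\<exists>a\<in>topspace S. \<exists>b\<in>topspace S. \<exists>c\<in>topspace S. a \<noteq> b \<and> a \<noteq> c \<and> b \<noteq> c"
    and "I \<subseteq> topspace S" and "\<forall>x\<in>I. openin S {x}"
  shows "pm_space (Q6_top S) (Q6_le I) Q6_zeta \<and> has_height (topspace (Q6_top S)) (Q6_le I) 1"
proof
  have "t1_space S"
    using assms(1) by (rule stone_space_imp_t1_space)
  have "\<forall>p q. Q6_le I p q \<longrightarrow> Q6_le I (Q6_zeta q) (Q6_zeta p)" "\<forall>p. Q6_zeta (Q6_zeta p) = p"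
    by (auto simp: Q6_le_def Q6_zeta_def)
  then show "pm_space (Q6_top S) (Q6_le I) Q6_zeta"
    unfolding pm_space_def
    using priestley_space_Q6[OF assms(1,4)] clopen_up_closure_Q6[OF \<open>t1_space S\<close> assms(4)]
      continuous_map_Q6_zeta
    by blast
  \<comment> \<open>Two distinct points already suffice, and \<open>I \<subseteq> topspace S\<close> is implied by the isolation of the points of \<open>I\<close>.\<close>
  show "has_height (topspace (Q6_top S)) (Q6_le I) 1"
    using assms(2) has_height_Q6 by metis
qed

end
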